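(* Consider the lattice Boltzmann scheme described in the context under acoustic scaling, with a prepared initialisation $w_i=\sum_{\mathfrak{e}}w_{i,\mathfrak{e}}x^{\mathfrak{e}}$ (finitely supported coefficients) satisfying $$\sum_{\mathfrak{e}}w_{1,\mathfrak{e}}=1,\qquad \sum_{\mathfrak{e}}w_{1,\mathfrak{e}}\mathfrak{e}^{\mathfrak{n}}=0\ \text{ for every } |\mathfrak{n}|=1,$$ and, for every $r\in\{2,\dots,q\}$ with $\mathcal{G}_{1r}\neq0$, $\sum_{\mathfrak{e}}w_{r,\mathfrak{e}}=\epsilon_r$. Then for every $n\in\mathbb{N}^*$ the modified equation of the $n$-th starting scheme reads $\partial_t\phi(0,x)+\lambda(\mathcal{G}_{11}+\sum_{r=2}^q\mathcal{G}_{1r}\epsilon_r)\phi(0,x)=O(\Delta x)$, i.e. the starting schemes are consistent with the modified equation of the bulk finite difference scheme at order $O(\Delta x)$. Moreover the initial datum $m_1(0,\cdot)=w_1m_1^\circ$ is consistent with the initial datum of the Cauchy problem up to order $O(\Delta x^2)$, i.e. $(w_1\phi)(x)=\phi(x)+O(\Delta x^2)$ for smooth $\phi$.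
   Context: Fix $d\ge1$, $q\ge1$, velocities $c_1,\dots,c_q\in\mathbb{Z}^d$, invertible $M$, $S=\mathrm{diag}(s_1,\dots,s_q)$ with $s_i\in(0,2]$ for $i\ge2$, $\epsilon\in\mathbb{R}^q$, $\epsilon_1=1$, all independent of $\Delta x$; $K=I-S(I-\epsilon e_1^T)$; acoustic scaling $\Delta t=\Delta x/\lambda$ with $\lambda>0$ fixed. Shifts $(x_\ell\phi)(x)=\phi(x-\Delta xe_\ell)$, $x^{\mathfrak{e}}=\prod x_\ell^{\mathfrak{e}_\ell}$, $\mathfrak{e}^{\mathfrak{n}}=\prod\mathfrak{e}_\ell^{\mathfrak{n}_\ell}$. $T=M\mathrm{diag}(x^{c_1},\dots,x^{c_q})M^{-1}$, $E=TK$, $(z\phi)(t)=\phi(t+\Delta t)$. $\mathcal{G}=M\mathrm{diag}(c_1\cdot\nabla,\dots,c_q\cdot\nabla)M^{-1}$. The target Cauchy problem is $\partial_tu+V\cdot\nabla u=0$, $u(0,\cdot)=u^\circ$, with point-wise lattice discretisation $m_1^\circ$ of $u^\circ$. Initialisation $m(0,x)=w\,m_1^\circ(x)$. The $n$-th starting scheme is $m_1(n\Delta t,x)=(E^nw)_1m_1^\circ(x)$; its modified equation is obtained by substituting a smooth $\phi$ into $(z^n\phi)(0,x)=((E^nw)_1\phi(0,\cdot))(x)$, Taylor-expanding in $\Delta x$, and dividing the first-order terms by $n\Delta x/\lambda$. The bulk finite difference scheme is $z^{Q+1-q}\det(zI-E)m_1=0$ ($Q$ the number of $i\ge2$ with $s_i\ne1$),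 whose modified equation at leading order is $\partial_t\phi+\lambda(\mathcal{G}_{11}+\sum_{r\ge2}\mathcal{G}_{1r}\epsilon_r)\phi=O(\Delta x)$. *)

theory Defs
  imports "HOL-Analysis.Analysis" "HOL-Library.Landau_Symbols"
begin

fun Ck :: "nat \<Rightarrow> ('a::real_normed_vector \<Rightarrow> 'b::real_normed_vector) \<Rightarrow> bool" where
  "Ck 0 f = continuous_on UNIV f"
| "Ck (Suc k) f = ((\<forall>x. f differentiable (at x)) \<and> continuous_on UNIV f \<and>
      (\<forall>v. Ck k (\<lambda>x. frechet_derivative f (at x) v)))"

definition smooth :: "('a::real_normed_vector \<Rightarrow> 'b::real_normed_vector) \<Rightarrow> bool" where
  "smooth f \<longleftrightarrow> (\<forall>k. Ck k f)"

definition rvec :: "int ^ 'd \<Rightarrow> real ^ 'd" where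
  "rvec e = (\<chi> l. of_int (e $ l))"

definition supp :: "(int ^ 'd \<Rightarrow> real) \<Rightarrow> (int ^ 'd) set" where
  "supp P = {e. P e \<noteq> 0}"

text \<open>Action of the shift polynomial  P = sum_e P_e x^e  on a lattice function:
  (x^e phi)(x) = phi(x - dx e).\<close>
definition shift_apply :: "real \<Rightarrow> (int ^ 'd \<Rightarrow> real) \<Rightarrow> (real ^ 'd \<Rightarrow> real) \<Rightarrow> real ^ 'd \<Rightarrow> real" where
  "shift_apply dx P \<phi> x = (\<Sum>e\<in>supp P. P e * \<phi> (x - dx *\<^sub>R rvec e))"

text \<open>Relaxation matrix K = I - S(I - eps e_1^T), S = diag(s_1..s_q), indices 1..q.\<close>
definition Kmat :: "(nat \<Rightarrow> real) \<Rightarrow> (nat \<Rightarrow> real) \<Rightarrow> nat \<Rightarrow> nat \<Rightarrow> real" where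
  "Kmat s \<epsilon> i j = (if i = j then 1 else 0) - s i * ((if i = j then 1 else 0) - \<epsilon> i * (if j = 1 then 1 else 0))"

text \<open>Action of T = M diag(x^{c_1},...,x^{c_q}) M^{-1} on a vector of lattice functions.\<close>
definition T_apply :: "nat \<Rightarrow> real \<Rightarrow> (nat \<Rightarrow> int ^ 'd) \<Rightarrow> (nat \<Rightarrow> nat \<Rightarrow> real) \<Rightarrow> (nat \<Rightarrow> nat \<Rightarrow> real)
    \<Rightarrow> (nat \<Rightarrow> real ^ 'd \<Rightarrow> real) \<Rightarrow> nat \<Rightarrow> real ^ 'd \<Rightarrow> real" where
  "T_apply q dx c M Minv f i x =
     (\<Sum>k=1..q. M i k * (\<Sum>j=1..q. Minv k j * f j (x - dx *\<^sub>R rvec (c k))))"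

definition E_apply :: "nat \<Rightarrow> real \<Rightarrow> (nat \<Rightarrow> int ^ 'd) \<Rightarrow> (nat \<Rightarrow> nat \<Rightarrow> real) \<Rightarrow> (nat \<Rightarrow> nat \<Rightarrow> real)
    \<Rightarrow> (nat \<Rightarrow> real) \<Rightarrow> (nat \<Rightarrow> real)
    \<Rightarrow> (nat \<Rightarrow> real ^ 'd \<Rightarrow> real) \<Rightarrow> nat \<Rightarrow> real ^ 'd \<Rightarrow> real" where
  "E_apply q dx c M Minv s \<epsilon> f =
     T_apply q dx c M Minv (\<lambda>j y. \<Sum>l=1..q. Kmat s \<epsilon> j l * f l y)"

definition start_scheme :: "nat \<Rightarrow> real \<Rightarrow> (nat \<Rightarrow> int ^ 'd) \<Rightarrow> (nat \<Rightarrow> nat \<Rightarrow> real) \<Rightarrow> (nat \<Rightarrow> nat \<Rightarrow> real)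
    \<Rightarrow> (nat \<Rightarrow> real) \<Rightarrow> (nat \<Rightarrow> real) \<Rightarrow> (nat \<Rightarrow> int ^ 'd \<Rightarrow> real) \<Rightarrow> nat
    \<Rightarrow> (real ^ 'd \<Rightarrow> real) \<Rightarrow> real ^ 'd \<Rightarrow> real" where
  "start_scheme q dx c M Minv s \<epsilon> w n \<phi> x =
     ((E_apply q dx c M Minv s \<epsilon> ^^ n) (\<lambda>i. shift_apply dx (w i) \<phi>)) 1 x"

text \<open>Coefficient vector of the first-order operator G_{1r} = sum_j M_{1j} (M^{-1})_{jr} c_j . grad.\<close>
definition Gvec :: "nat \<Rightarrow> (nat \<Rightarrow> int ^ 'd) \<Rightarrow> (nat \<Rightarrow> nat \<Rightarrow> real) \<Rightarrow> (nat \<Rightarrow> nat \<Rightarrow> real) \<Rightarrow> nat \<Rightarrow> real ^ 'd" where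
  "Gvec q c M Minv r = (\<Sum>j=1..q. (M 1 j * Minv j r) *\<^sub>R rvec (c j))"

definition G_apply :: "nat \<Rightarrow> (nat \<Rightarrow> int ^ 'd) \<Rightarrow> (nat \<Rightarrow> nat \<Rightarrow> real) \<Rightarrow> (nat \<Rightarrow> nat \<Rightarrow> real) \<Rightarrow> nat
    \<Rightarrow> (real \<times> (real ^ 'd) \<Rightarrow> real) \<Rightarrow> real \<times> (real ^ 'd) \<Rightarrow> real" where
  "G_apply q c M Minv r \<psi> p = frechet_derivative \<psi> (at p) (0, Gvec q c M Minv r)"

end

theory Submission imports Defs begin

(*
  View the iterates E^n w as vectors of shift polynomials. Evaluating at x = 1 turns T into
  M M^{-1} = I, so the masses (zeroth moments) evolve by the relaxation matrix K alone: since
  eps_1 = 1 the mass of the first component stays 1, and each mass eps_r is an equilibrium.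
  Differentiating at x = 1 shows that every step adds sum_j mass_j G_{1j} = V to the first
  moment of the first component, where V . grad = G_11 + sum_r G_1r eps_r; hence that first
  moment equals n V. A second-order Taylor expansion then gives
  (E^n w)_1 phi(0,.) = phi(0,x) - n dx V . grad phi(0,x) + O(dx^2), to be compared with
  phi(n dt, x) = phi(0,x) + n dt d_t phi(0,x) + O(dx^2).
*)

lemma smooth_differentiable:
  "smooth f \<Longrightarrow> f differentiable (at x)"
  unfolding smooth_def by (metis Ck.simps(2))

lemma smooth_linear_frechet_derivative:
  "smooth f \<Longrightarrow> linear (frechet_derivative f (at x))"
  using smooth_differentiable frechet_derivative_works has_derivative_linear by blast

lemma has_real_derivative_along_line:
  fixes F :: "'a::real_normed_vector \<Rightarrow> real"
  assumes "F differentiable (at (p + h *\<^sub>R v))"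
  shows "((\<lambda>t. F (p + t *\<^sub>R v)) has_real_derivative frechet_derivative F (at (p + h *\<^sub>R v)) v) (at h)"
proof -
  let ?D = "frechet_derivative F (at (p + h *\<^sub>R v))"
  have "(F \<circ> (\<lambda>t. p + t *\<^sub>R v) has_derivative ?D \<circ> (\<lambda>t. t *\<^sub>R v)) (at h)"
    by (rule diff_chain_at) (auto intro!: derivative_eq_intros simp: assms frechet_derivative_works[symmetric])
  moreover have "?D \<circ> (\<lambda>t. t *\<^sub>R v) = (*) (?D v)"
    using linear_cmul[OF has_derivative_linear] assms frechet_derivative_works
    by (fastforce simp: fun_eq_iff)
  ultimately show ?thesis by (simp add: has_field_derivative_def o_def)
qed

lemma second_order_remainder_bound:
  fixes u u' u'' :: "real \<Rightarrow> real"
  assumes "\<And>t. (u has_real_derivative u' t) (at t)" "\<And>t. (u' has_real_derivative u'' t) (at t)"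
    and "\<forall>t\<in>{0..h}. \<bar>u'' t\<bar> \<le> B" and "0 < h"
  shows "\<bar>u h - u 0 - h * u' 0\<bar> \<le> B * h\<^sup>2"
proof -
  obtain z where z: "0 < z" "z < h" "u h - u 0 = h * u' z"
    using MVT2[of 0 h u u'] assms by auto
  obtain y where y: "0 < y" "y < z" "u' z - u' 0 = z * u'' y"
    using MVT2[of 0 z u' u''] assms z by auto
  have "u h - u 0 - h * u' 0 = (h * z) * u'' y"
    using z y by (simp add: algebra_simps)
  moreover have "\<bar>u'' y\<bar> \<le> B" "0 \<le> h * z" "h * z \<le> h\<^sup>2"
    using assms y z by (auto simp: power2_eq_square)
  ultimately show ?thesis
    by (simp add: abs_mult mult_mono' mult.commute)
qed

lemma smooth_taylor_second_order:
  fixes f :: "'a::real_normed_vector \<Rightarrow> real"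
  assumes "smooth f"
  shows "(\<lambda>h. f (p + h *\<^sub>R v) - f p - h * frechet_derivative f (at p) v) \<in> O[at_right 0](\<lambda>h. h\<^sup>2)"
proof -
  define g where "g = (\<lambda>x. frechet_derivative f (at x) v)"
  define g' where "g' = (\<lambda>x. frechet_derivative g (at x) v)"
  have C2: "Ck 2 f" using assms smooth_def by blast
  then have df: "f differentiable (at x)" and dg: "g differentiable (at x)"
    and cg': "continuous_on UNIV g'" for x
    by (simp_all add: numeral_2_eq_2 g_def g'_def)
  have "continuous_on {0..1} (\<lambda>t. g' (p + t *\<^sub>R v))"
    by (intro continuous_on_compose2[OF cg'] continuous_intros) auto
  then have "bounded ((\<lambda>t. g' (p + t *\<^sub>R v)) ` {0..1})"
    by (intro compact_imp_bounded compact_continuous_image compact_Icc)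
  then obtain B where B: "\<forall>t\<in>{0..1}. \<bar>g' (p + t *\<^sub>R v)\<bar> \<le> B"
    unfolding bounded_iff by auto
  have "\<forall>\<^sub>F h in at_right 0. norm (f (p + h *\<^sub>R v) - f p - h * g p) \<le> B * norm (h\<^sup>2)"
  proof (rule eventually_mono[OF eventually_at_right_real[OF zero_less_one]])
    fix h :: real assume "h \<in> {0<..<1}"
    then have "\<bar>f (p + h *\<^sub>R v) - f (p + 0 *\<^sub>R v) - h * g (p + 0 *\<^sub>R v)\<bar> \<le> B * h\<^sup>2"
      using B
      by (intro second_order_remainder_bound[where u'="\<lambda>t. g (p + t *\<^sub>R v)"
          and u''="\<lambda>t. g' (p + t *\<^sub>R v)"])
        (auto simp: g_def g'_def intro!: has_real_derivative_along_line df dg[unfolded g_def])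
    then show "norm (f (p + h *\<^sub>R v) - f p - h * g p) \<le> B * norm (h\<^sup>2)" by simp
  qed
  then show ?thesis unfolding g_def by (rule bigoI)
qed

lemma weighted_taylor_second_order:
  fixes f :: "'a::real_normed_vector \<Rightarrow> real"
  assumes "smooth f" and "finite S"
  shows "(\<lambda>h. (\<Sum>e\<in>S. P e * f (p + h *\<^sub>R V e)) - (\<Sum>e\<in>S. P e) * f p
            - h * frechet_derivative f (at p) (\<Sum>e\<in>S. P e *\<^sub>R V e)) \<in> O[at_right 0](\<lambda>h. h\<^sup>2)"
proof -
  define D where "D = frechet_derivative f (at p)"
  have "linear D"
    unfolding D_def using assms(1) by (rule smooth_linear_frechet_derivative)
  then have "(\<Sum>e\<in>S. P e * f (p + h *\<^sub>R V e)) - (\<Sum>e\<in>S. P e) * f p - h * D (\<Sum>e\<in>S. P e *\<^sub>R V e)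
      = (\<Sum>e\<in>S. P e * (f (p + h *\<^sub>R V e) - f p - h * D (V e)))" for h
    by (simp add: linear_sum linear_cmul sum_distrib_left sum_distrib_right sum_subtractf sum.distrib algebra_simps)
  moreover have "(\<lambda>h. \<Sum>e\<in>S. P e * (f (p + h *\<^sub>R V e) - f p - h * D (V e))) \<in> O[at_right 0](\<lambda>h. h\<^sup>2)"
  proof (rule big_sum_in_bigo)
    fix e
    show "(\<lambda>h. P e * (f (p + h *\<^sub>R V e) - f p - h * D (V e))) \<in> O[at_right 0](\<lambda>h. h\<^sup>2)"
      using smooth_taylor_second_order[OF assms(1), of p "V e"]
      by (cases "P e = 0") (simp_all add: D_def)
  qed
  ultimately show ?thesis unfolding D_def by simp
qed

lemma bigo_difference_quotient:
  fixes F :: "real \<Rightarrow> real"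
  assumes "(\<lambda>h. F h - (k * h) * a) \<in> O[at_right 0](\<lambda>h. h\<^sup>2)" and "k \<noteq> 0"
  shows "(\<lambda>h. F h / (k * h) - a) \<in> O[at_right 0](\<lambda>h. h)"
proof -
  have "(\<lambda>h. (F h - (k * h) * a) / (k * h)) \<in> O[at_right 0](\<lambda>h. h\<^sup>2 / (k * h))"
    using assms by (intro landau_o.big.divide_right eventually_at_right_less[THEN eventually_mono]) auto
  moreover have "(\<lambda>h::real. h\<^sup>2 / (k * h)) = (\<lambda>h. h / k)"
    using assms(2) by (auto simp: fun_eq_iff power2_eq_square)
  moreover have "\<forall>\<^sub>F h in at_right 0. (F h - (k * h) * a) / (k * h) = F h / (k * h) - a"
    using assms(2) by (intro eventually_at_right_less[THEN eventually_mono]) (auto simp: field_simps)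
  ultimately show ?thesis
    using assms(2) by (simp add: landau_o.big.in_cong)
qed

definition coeff_sum :: "(int ^ 'd \<Rightarrow> real) \<Rightarrow> (int ^ 'd \<Rightarrow> 'b::real_vector) \<Rightarrow> 'b" where
  "coeff_sum P g = (\<Sum>e\<in>supp P. P e *\<^sub>R g e)"

definition mass :: "(int ^ 'd \<Rightarrow> real) \<Rightarrow> real" where
  "mass P = coeff_sum P (\<lambda>_. 1)"

definition first_moment :: "(int ^ 'd \<Rightarrow> real) \<Rightarrow> real ^ 'd" where
  "first_moment P = coeff_sum P rvec"

lemma coeff_sum_superset:
  assumes "finite A" and "supp P \<subseteq> A"
  shows "coeff_sum P g = (\<Sum>e\<in>A. P e *\<^sub>R g e)"
  unfolding coeff_sum_def using assms by (intro sum.mono_neutral_left) (auto simp: supp_def)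

lemma supp_translate: "supp (\<lambda>e. P (e - c)) = (\<lambda>e. e + c) ` supp P"
  by (force simp: supp_def image_iff intro: exI[of _ "_ - c"])

lemma coeff_sum_translate: "coeff_sum (\<lambda>e. P (e - c)) g = coeff_sum P (\<lambda>e. g (e + c))"
  unfolding coeff_sum_def supp_translate by (subst sum.reindex) (auto simp: inj_on_def)

lemma rvec_add: "rvec (a + b) = rvec a + rvec b"
  by (simp add: rvec_def vec_eq_iff)

lemma shift_apply_eq_coeff_sum: "shift_apply dx P \<phi> x = coeff_sum P (\<lambda>e. \<phi> (x - dx *\<^sub>R rvec e))"
  by (simp add: shift_apply_def coeff_sum_def)

lemma shift_apply_consistent:
  fixes \<phi> :: "real ^ 'd \<Rightarrow> real"
  assumes "smooth \<phi>" and "finite (supp P)" and "mass P = 1" and "first_moment P = 0"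
  shows "(\<lambda>dx. shift_apply dx P \<phi> x - \<phi> x) \<in> O[at_right 0](\<lambda>dx. dx\<^sup>2)"
proof -
  have "(\<Sum>e\<in>supp P. P e *\<^sub>R - rvec e) = 0"
    using assms(4) by (simp add: first_moment_def coeff_sum_def sum_negf)
  moreover have "frechet_derivative \<phi> (at x) 0 = 0"
    using smooth_linear_frechet_derivative[OF assms(1)] by (rule linear_0)
  ultimately show ?thesis
    using weighted_taylor_second_order[OF assms(1,2), of P x "\<lambda>e. - rvec e"] assms(3)
    by (simp add: shift_apply_def mass_def coeff_sum_def)
qed

lemma right_inverse_sum_apply:
  fixes Y :: "nat \<Rightarrow> 'b::real_vector"
  assumes "\<forall>i\<in>{1..q}. \<forall>j\<in>{1..q}. (\<Sum>k=1..q. M i k * Minv k j) = (if i = j then 1 else 0)"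
    and "i \<in> {1..q}"
  shows "(\<Sum>k=1..q. M i k *\<^sub>R (\<Sum>j=1..q. Minv k j *\<^sub>R Y j)) = Y i"
proof -
  have "(\<Sum>k=1..q. M i k *\<^sub>R (\<Sum>j=1..q. Minv k j *\<^sub>R Y j)) = (\<Sum>j=1..q. (\<Sum>k=1..q. M i k * Minv k j) *\<^sub>R Y j)"
    by (simp add: scaleR_sum_right scaleR_sum_left) (rule sum.swap)
  also have "\<dots> = (\<Sum>j=1..q. if i = j then Y j else 0)"
    using assms by (intro sum.cong) auto
  finally show ?thesis using assms(2) by simp
qed

lemma Kmat_sum_apply:
  fixes Y :: "nat \<Rightarrow> 'b::real_vector"
  assumes "r \<in> {1..q}"
  shows "(\<Sum>l=1..q. Kmat s \<epsilon> r l *\<^sub>R Y l) = Y r - s r *\<^sub>R (Y r - \<epsilon> r *\<^sub>R Y 1)"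
proof -
  have "Kmat s \<epsilon> r l *\<^sub>R Y l = (if l = r then (1 - s r) *\<^sub>R Y l else 0) + (if l = 1 then (s r * \<epsilon> r) *\<^sub>R Y l else 0)" for l
    by (simp add: Kmat_def algebra_simps)
  then show ?thesis
    using assms by (simp add: sum.distrib algebra_simps)
qed

context
  fixes q :: nat and c :: "nat \<Rightarrow> int ^ 'd" and M Minv :: "nat \<Rightarrow> nat \<Rightarrow> real"
    and s \<epsilon> :: "nat \<Rightarrow> real"
begin

text \<open>Coefficients of the shift polynomial (E P)_i: the shift x^{c_k} translates exponents by c_k.\<close>
definition E_coeffs :: "(nat \<Rightarrow> int ^ 'd \<Rightarrow> real) \<Rightarrow> nat \<Rightarrow> int ^ 'd \<Rightarrow> real" where
  "E_coeffs P i e =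
     (\<Sum>k=1..q. M i k * (\<Sum>j=1..q. Minv k j * (\<Sum>l=1..q. Kmat s \<epsilon> j l * P l (e - c k))))"

lemma supp_E_coeffs_subset:
  "supp (E_coeffs P i) \<subseteq> (\<Union>k\<in>{1..q}. \<Union>l\<in>{1..q}. supp (\<lambda>e. P l (e - c k)))"
proof
  fix e assume "e \<in> supp (E_coeffs P i)"
  moreover have "e \<notin> supp (E_coeffs P i)"
    if "\<forall>k\<in>{1..q}. \<forall>l\<in>{1..q}. P l (e - c k) = 0"
    using that by (simp add: supp_def E_coeffs_def)
  ultimately show "e \<in> (\<Union>k\<in>{1..q}. \<Union>l\<in>{1..q}. supp (\<lambda>e. P l (e - c k)))"
    by (auto simp: supp_def)
qed

lemma finite_supp_E_coeffs:
  "\<forall>l\<in>{1..q}. finite (supp (P l)) \<Longrightarrow> finite (supp (E_coeffs P i))"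
  by (rule finite_subset[OF supp_E_coeffs_subset]) (auto simp: supp_translate)

lemma finite_supp_E_coeffs_power:
  "\<forall>l\<in>{1..q}. finite (supp (P l)) \<Longrightarrow> \<forall>l\<in>{1..q}. finite (supp ((E_coeffs ^^ n) P l))"
  by (induction n) (simp_all add: finite_supp_E_coeffs)

lemma coeff_sum_E_coeffs:
  assumes "\<forall>l\<in>{1..q}. finite (supp (P l))"
  shows "coeff_sum (E_coeffs P i) g =
    (\<Sum>k=1..q. M i k *\<^sub>R (\<Sum>j=1..q. Minv k j *\<^sub>R
       (\<Sum>l=1..q. Kmat s \<epsilon> j l *\<^sub>R coeff_sum (P l) (\<lambda>e. g (e + c k)))))"
proof -
  define U where "U = (\<Union>k\<in>{1..q}. \<Union>l\<in>{1..q}. supp (\<lambda>e. P l (e - c k)))"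
  have U: "finite U" using assms by (auto simp: U_def supp_translate)
  have "coeff_sum (E_coeffs P i) g = (\<Sum>e\<in>U. E_coeffs P i e *\<^sub>R g e)"
    using U supp_E_coeffs_subset unfolding U_def by (rule coeff_sum_superset)
  also have "\<dots> = (\<Sum>k=1..q. M i k *\<^sub>R (\<Sum>j=1..q. Minv k j *\<^sub>R (\<Sum>l=1..q. Kmat s \<epsilon> j l *\<^sub>R
        (\<Sum>e\<in>U. P l (e - c k) *\<^sub>R g e))))"
    by (simp add: E_coeffs_def sum_distrib_left scaleR_sum_left scaleR_sum_right sum.swap[of _ U]
        mult.assoc)
  also have "\<dots> = (\<Sum>k=1..q. M i k *\<^sub>R (\<Sum>j=1..q. Minv k j *\<^sub>R
       (\<Sum>l=1..q. Kmat s \<epsilon> j l *\<^sub>R coeff_sum (P l) (\<lambda>e. g (e + c k)))))"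
  proof (intro sum.cong refl arg_cong2[where f="(*\<^sub>R)"])
    fix k l assume "k \<in> {1..q}" "l \<in> {1..q}"
    then have "supp (\<lambda>e. P l (e - c k)) \<subseteq> U" unfolding U_def by blast
    then show "(\<Sum>e\<in>U. P l (e - c k) *\<^sub>R g e) = coeff_sum (P l) (\<lambda>e. g (e + c k))"
      using U by (simp add: coeff_sum_superset coeff_sum_translate[symmetric])
  qed
  finally show ?thesis .
qed

lemma E_apply_shift_apply:
  assumes "\<forall>l\<in>{1..q}. finite (supp (P l))"
  shows "E_apply q dx c M Minv s \<epsilon> (\<lambda>i. shift_apply dx (P i) \<phi>) i x
       = shift_apply dx (E_coeffs P i) \<phi> x"
  unfolding shift_apply_eq_coeff_sum coeff_sum_E_coeffs[OF assms] E_apply_def T_apply_def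
  by (simp add: rvec_add algebra_simps)

lemma start_scheme_eq_shift_apply:
  assumes "\<forall>l\<in>{1..q}. finite (supp (w l))"
  shows "start_scheme q dx c M Minv s \<epsilon> w n \<phi> x = shift_apply dx ((E_coeffs ^^ n) w 1) \<phi> x"
proof -
  have "(E_apply q dx c M Minv s \<epsilon> ^^ n) (\<lambda>i. shift_apply dx (w i) \<phi>)
      = (\<lambda>i. shift_apply dx ((E_coeffs ^^ n) w i) \<phi>)"
    by (induction n) (auto simp: E_apply_shift_apply finite_supp_E_coeffs_power assms)
  then show ?thesis by (simp add: start_scheme_def)
qed

text \<open>The operator G_11 + sum_r G_1r eps_r of the bulk modified equation is bulk_velocity . grad.\<close>
definition bulk_velocity :: "real ^ 'd" where
  "bulk_velocity = Gvec q c M Minv 1 + (\<Sum>r=2..q. \<epsilon> r *\<^sub>R Gvec q c M Minv r)"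

definition prepared :: "(nat \<Rightarrow> int ^ 'd \<Rightarrow> real) \<Rightarrow> bool" where
  "prepared P \<longleftrightarrow> (\<forall>l\<in>{1..q}. finite (supp (P l))) \<and> mass (P 1) = 1
     \<and> (\<forall>r\<in>{2..q}. Gvec q c M Minv r \<noteq> 0 \<longrightarrow> mass (P r) = \<epsilon> r)"

lemma frechet_derivative_bulk_velocity:
  assumes "smooth \<phi>"
  shows "frechet_derivative \<phi> (at p) (0, bulk_velocity)
       = G_apply q c M Minv 1 \<phi> p + (\<Sum>r=2..q. \<epsilon> r * G_apply q c M Minv r \<phi> p)"
proof -
  define D where "D = frechet_derivative \<phi> (at p)"
  have lin: "linear D"
    unfolding D_def using assms by (rule smooth_linear_frechet_derivative)
  have split: "(0, bulk_velocity) = (0, Gvec q c M Minv 1) + (\<Sum>r=2..q. \<epsilon> r *\<^sub>R (0, Gvec q c M Minv r))"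
    by (simp add: bulk_velocity_def prod_eq_iff fst_sum snd_sum)
  have "D (0, bulk_velocity) = D (0, Gvec q c M Minv 1) + (\<Sum>r=2..q. D (\<epsilon> r *\<^sub>R (0, Gvec q c M Minv r)))"
    unfolding split by (simp only: real_vector.linear_add[OF lin] real_vector.linear_sum[OF lin])
  also have "\<dots> = D (0, Gvec q c M Minv 1) + (\<Sum>r=2..q. \<epsilon> r * D (0, Gvec q c M Minv r))"
    by (simp only: linear_cmul[OF lin] real_scaleR_def)
  finally show ?thesis by (simp add: G_apply_def D_def)
qed

context
  assumes q_pos: "q \<ge> 1"
    and M_inv_right: "\<forall>i\<in>{1..q}. \<forall>j\<in>{1..q}. (\<Sum>k=1..q. M i k * Minv k j) = (if i = j then 1 else 0)"
    and eps1: "\<epsilon> 1 = 1"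
begin

lemma mass_E_coeffs:
  assumes "\<forall>l\<in>{1..q}. finite (supp (P l))" and "i \<in> {1..q}"
  shows "mass (E_coeffs P i) = (\<Sum>l=1..q. Kmat s \<epsilon> i l * mass (P l))"
  using right_inverse_sum_apply[OF M_inv_right assms(2), of "\<lambda>j. \<Sum>l=1..q. Kmat s \<epsilon> j l * mass (P l)"]
  by (simp add: mass_def coeff_sum_E_coeffs[OF assms(1)])

lemma first_moment_E_coeffs:
  assumes "\<forall>l\<in>{1..q}. finite (supp (P l))"
  shows "first_moment (E_coeffs P 1)
       = first_moment (P 1) + (\<Sum>j=1..q. mass (E_coeffs P j) *\<^sub>R Gvec q c M Minv j)"
proof -
  define a where "a l = mass (P l)" for l
  define b where "b l = first_moment (P l)" for l
  have one: "1 \<in> {1..q}" using q_pos by simp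
  have "coeff_sum (P l) (\<lambda>e. rvec (e + c k)) = b l + a l *\<^sub>R rvec (c k)" for l k
    by (simp add: a_def b_def mass_def first_moment_def coeff_sum_def rvec_add scaleR_add_right
        sum.distrib scaleR_sum_left)
  then have "first_moment (E_coeffs P 1) =
     (\<Sum>k=1..q. M 1 k *\<^sub>R (\<Sum>j=1..q. Minv k j *\<^sub>R (\<Sum>l=1..q. Kmat s \<epsilon> j l *\<^sub>R b l)))
   + (\<Sum>k=1..q. M 1 k *\<^sub>R (\<Sum>j=1..q. Minv k j *\<^sub>R ((\<Sum>l=1..q. Kmat s \<epsilon> j l * a l) *\<^sub>R rvec (c k))))"
    by (simp add: first_moment_def coeff_sum_E_coeffs[OF assms] scaleR_add_right sum.distrib
        scaleR_sum_left)
  also have "(\<Sum>k=1..q. M 1 k *\<^sub>R (\<Sum>j=1..q. Minv k j *\<^sub>R (\<Sum>l=1..q. Kmat s \<epsilon> j l *\<^sub>R b l))) = b 1"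
    using right_inverse_sum_apply[OF M_inv_right one, of "\<lambda>j. \<Sum>l=1..q. Kmat s \<epsilon> j l *\<^sub>R b l"]
      Kmat_sum_apply[OF one, of s \<epsilon> b] eps1 by simp
  also have "(\<Sum>k=1..q. M 1 k *\<^sub>R (\<Sum>j=1..q. Minv k j *\<^sub>R ((\<Sum>l=1..q. Kmat s \<epsilon> j l * a l) *\<^sub>R rvec (c k))))
      = (\<Sum>j=1..q. (\<Sum>l=1..q. Kmat s \<epsilon> j l * a l) *\<^sub>R Gvec q c M Minv j)"
    unfolding Gvec_def by (simp add: scaleR_sum_right mult_ac) (rule sum.swap)
  finally show ?thesis
    using mass_E_coeffs[OF assms] by (simp add: a_def b_def)
qed

lemma prepared_E_coeffs:
  assumes "prepared P"
  shows "prepared (E_coeffs P)"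
proof -
  have fin: "\<forall>l\<in>{1..q}. finite (supp (P l))" using assms by (simp add: prepared_def)
  have "mass (E_coeffs P i) = mass (P i) - s i * (mass (P i) - \<epsilon> i * mass (P 1))" if "i \<in> {1..q}" for i
    using mass_E_coeffs[OF fin that] Kmat_sum_apply[OF that, of s \<epsilon> "\<lambda>l. mass (P l)"] by simp
  then show ?thesis
    using assms q_pos eps1 by (auto simp: prepared_def finite_supp_E_coeffs)
qed

lemma prepared_E_coeffs_power: "prepared P \<Longrightarrow> prepared ((E_coeffs ^^ n) P)"
  by (induction n) (simp_all add: prepared_E_coeffs)

lemma prepared_sum_mass_Gvec:
  assumes "prepared P"
  shows "(\<Sum>j=1..q. mass (P j) *\<^sub>R Gvec q c M Minv j) = bulk_velocity"
proof -
  have "(\<Sum>j=2..q. mass (P j) *\<^sub>R Gvec q c M Minv j) = (\<Sum>r=2..q. \<epsilon> r *\<^sub>R Gvec q c M Minv r)"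
    using assms by (intro sum.cong) (auto simp: prepared_def)
  then show ?thesis
    using assms sum.atLeast_Suc_atMost[OF q_pos, of "\<lambda>j. mass (P j) *\<^sub>R Gvec q c M Minv j"]
    by (simp add: prepared_def bulk_velocity_def numeral_2_eq_2)
qed

lemma first_moment_E_coeffs_power:
  assumes "prepared w"
  shows "first_moment ((E_coeffs ^^ n) w 1) = first_moment (w 1) + real n *\<^sub>R bulk_velocity"
proof (induction n)
  case (Suc n)
  have "prepared ((E_coeffs ^^ n) w)" "prepared (E_coeffs ((E_coeffs ^^ n) w))"
    using prepared_E_coeffs_power[OF assms, of n] prepared_E_coeffs_power[OF assms, of "Suc n"] by simp_all
  then have "first_moment ((E_coeffs ^^ Suc n) w 1) = first_moment ((E_coeffs ^^ n) w 1) + bulk_velocity"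
    using first_moment_E_coeffs prepared_sum_mass_Gvec by (simp add: prepared_def)
  then show ?case
    using Suc by (simp add: algebra_simps)
qed simp

lemma start_scheme_consistent:
  fixes \<phi> :: "real \<times> (real ^ 'd) \<Rightarrow> real"
  assumes "prepared w" and "first_moment (w 1) = 0" and "smooth \<phi>" and "n \<ge> 1" and "lam > 0"
  shows "(\<lambda>dx. (\<phi> (real n * dx / lam, x) - start_scheme q dx c M Minv s \<epsilon> w n (\<lambda>y. \<phi> (0, y)) x)
              / (real n * dx / lam)
           - (frechet_derivative \<phi> (at (0, x)) (1, 0)
              + lam * (G_apply q c M Minv 1 \<phi> (0, x)
                       + (\<Sum>r=2..q. \<epsilon> r * G_apply q c M Minv r \<phi> (0, x)))))
         \<in> O[at_right 0](\<lambda>dx. dx)"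
proof -
  define P where "P = (E_coeffs ^^ n) w 1"
  define D where "D = frechet_derivative \<phi> (at (0, x))"
  define \<kappa> where "\<kappa> = real n / lam"
  define S where "S dx = (\<Sum>e\<in>supp P. P e * \<phi> ((0, x) + dx *\<^sub>R (0, - rvec e)))" for dx
  have lin: "linear D"
    unfolding D_def using assms(3) by (rule smooth_linear_frechet_derivative)
  have P: "finite (supp P)" "mass P = 1" "first_moment P = real n *\<^sub>R bulk_velocity"
    using prepared_E_coeffs_power[OF assms(1), of n] first_moment_E_coeffs_power[OF assms(1), of n]
      assms(2) q_pos by (auto simp: P_def prepared_def)
  have start: "start_scheme q dx c M Minv s \<epsilon> w n (\<lambda>y. \<phi> (0, y)) x = S dx" for dx
    using assms(1) by (simp add: start_scheme_eq_shift_apply prepared_def shift_apply_def S_def P_def)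
  have time: "(\<lambda>dx. \<phi> ((0, x) + dx *\<^sub>R (\<kappa>, 0)) - \<phi> (0, x) - dx * D (\<kappa>, 0)) \<in> O[at_right 0](\<lambda>h. h\<^sup>2)"
    unfolding D_def using assms(3) by (rule smooth_taylor_second_order)
  have "(\<Sum>e\<in>supp P. P e *\<^sub>R (0::real, - rvec e)) = - real n *\<^sub>R (0, bulk_velocity)"
    using P(3) by (simp add: first_moment_def coeff_sum_def prod_eq_iff fst_sum snd_sum sum_negf)
  moreover have "D (0, - (real n *\<^sub>R bulk_velocity)) = - (real n * D (0, bulk_velocity))"
    using linear_cmul[OF lin, of "- real n" "(0, bulk_velocity)"] by simp
  ultimately have space: "(\<lambda>dx. S dx - \<phi> (0, x) + dx * (real n * D (0, bulk_velocity)))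
      \<in> O[at_right 0](\<lambda>h. h\<^sup>2)"
    using weighted_taylor_second_order[OF assms(3) P(1), of P "(0, x)" "\<lambda>e. (0, - rvec e)", folded D_def]
      P(2) by (simp add: S_def mass_def coeff_sum_def)
  have "(\<lambda>dx. (\<phi> (\<kappa> * dx, x) - S dx) - (\<kappa> * dx) * (D (1, 0) + lam * D (0, bulk_velocity)))
      \<in> O[at_right 0](\<lambda>h. h\<^sup>2)"
    using sum_in_bigo(2)[OF time space] linear_cmul[OF lin, of \<kappa> "(1, 0)"] assms(5)
    by (simp add: \<kappa>_def algebra_simps)
  then have "(\<lambda>dx. (\<phi> (\<kappa> * dx, x) - S dx) / (\<kappa> * dx) - (D (1, 0) + lam * D (0, bulk_velocity)))
      \<in> O[at_right 0](\<lambda>h. h)"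
    using assms(4,5) by (intro bigo_difference_quotient) (auto simp: \<kappa>_def)
  then show ?thesis
    using frechet_derivative_bulk_velocity[OF assms(3)] by (simp add: start \<kappa>_def D_def mult.commute)
qed

end

end

theorem corollary2:
  fixes q :: nat and lam :: real
    and c :: "nat \<Rightarrow> int ^ 'd"
    and M Minv :: "nat \<Rightarrow> nat \<Rightarrow> real"
    and s \<epsilon> :: "nat \<Rightarrow> real"
    and w :: "nat \<Rightarrow> int ^ 'd \<Rightarrow> real"
  assumes q_pos: "q \<ge> 1"
    and lam_pos: "lam > 0"
    and M_inv_right: "\<forall>i\<in>{1..q}. \<forall>j\<in>{1..q}. (\<Sum>k=1..q. M i k * Minv k j) = (if i = j then 1 else 0)"
    and M_inv_left: "\<forall>i\<in>{1..q}. \<forall>j\<in>{1..q}. (\<Sum>k=1..q. Minv i k * M k j) = (if i = j then 1 else 0)"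
    and s_range: "\<forall>i\<in>{2..q}. 0 < s i \<and> s i \<le> 2"
    and eps1: "\<epsilon> 1 = 1"
    and w_fin: "\<forall>i\<in>{1..q}. finite (supp (w i))"
    and w1_mass: "(\<Sum>e\<in>supp (w 1). w 1 e) = 1"
    and w1_first: "\<forall>l. (\<Sum>e\<in>supp (w 1). w 1 e * of_int (e $ l)) = 0"
    and wr_mass: "\<forall>r\<in>{2..q}. Gvec q c M Minv r \<noteq> 0 \<longrightarrow> (\<Sum>e\<in>supp (w r). w r e) = \<epsilon> r"
  shows
    "(\<forall>(\<phi> :: real \<times> (real ^ 'd) \<Rightarrow> real) x (n :: nat). smooth \<phi> \<and> n \<ge> 1 \<longrightarrow>
        (\<lambda>dx. (\<phi> (real n * dx / lam, x)
                 - start_scheme q dx c M Minv s \<epsilon> w n (\<lambda>y. \<phi> (0, y)) x) / (real n * dx / lam)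
              - (frechet_derivative \<phi> (at (0, x)) (1, 0)
                 + lam * (G_apply q c M Minv 1 \<phi> (0, x)
                        + (\<Sum>r=2..q. \<epsilon> r * G_apply q c M Minv r \<phi> (0, x)))))
        \<in> O[at_right 0](\<lambda>dx. dx))
     \<and> (\<forall>(\<phi> :: real ^ 'd \<Rightarrow> real) x. smooth \<phi> \<longrightarrow>
        (\<lambda>dx. shift_apply dx (w 1) \<phi> x - \<phi> x) \<in> O[at_right 0](\<lambda>dx. dx ^ 2))"
proof -
  have prep: "prepared q c M Minv \<epsilon> w"
    using w_fin w1_mass wr_mass by (simp add: prepared_def mass_def coeff_sum_def)
  have first: "first_moment (w 1) = 0"
    using w1_first by (simp add: first_moment_def coeff_sum_def rvec_def vec_eq_iff)
  show ?thesis
    using start_scheme_consistent[OF q_pos M_inv_right eps1 prep first _ _ lam_pos]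
      shift_apply_consistent[OF _ _ _ first] prep q_pos
    by (auto simp: prepared_def)
qed

end
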